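(* Let $\mu\in(0,1)$ and let $\beta:[0,\infty)\to(0,\infty)$ be positive, bounded, non-increasing with $\lim_{a\to\infty}a\beta(a)=\mu$. Let $B(a)=\int_0^a\beta(s)\,ds$, $W(\tau,b)=C(\tau)e^{-B(e^{\tau}b)}(1-b)^{\mu-1}$ for $\tau\ge0$, $b\in[0,1)$, with $C(\tau)>0$ such that $\int_0^1W(\tau,b)\,db=1$, and $\delta(\tau)=\frac{C'(\tau)}{C(\tau)^2}-\frac{\mu}{C(\tau)}$. Then $$C(\tau)\delta(\tau)=\frac{C'(\tau)}{C(\tau)}-\mu=\int_0^1\left[be^{\tau}\beta(e^{\tau}b)-\mu\right]W(\tau,b)\,db,$$ and $\lim_{\tau\to\infty}C(\tau)\delta(\tau)=0$. *)

theory Defs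
  imports "HOL-Analysis.Analysis"
begin

definition Bint :: "(real \<Rightarrow> real) \<Rightarrow> real \<Rightarrow> real" where
  "Bint \<beta> a = integral {0..a} \<beta>"

definition Wfun :: "(real \<Rightarrow> real) \<Rightarrow> real \<Rightarrow> (real \<Rightarrow> real) \<Rightarrow> real \<Rightarrow> real \<Rightarrow> real" where
  "Wfun \<beta> \<mu> C \<tau> b = C \<tau> * exp (- Bint \<beta> (exp \<tau> * b)) * (1 - b) powr (\<mu> - 1)"

definition delta :: "real \<Rightarrow> (real \<Rightarrow> real) \<Rightarrow> real \<Rightarrow> real" where
  "delta \<mu> C \<tau> = deriv C \<tau> / (C \<tau>)\<^sup>2 - \<mu> / C \<tau>"

end

theory Submission
  imports Defs
begin

text \<open>
  Put c = exp \<tau>. The normalisation says C(\<tau>) = 1 / N(c), where N(c) is the integral over [0,1]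
  of exp(-B(cb)) (1-b)^(\<mu>-1). Since \<beta> is monotone, B is Lipschitz and differentiable off a
  countable set, so dominated convergence allows differentiating N under the integral sign; the
  logarithmic derivative of C = 1/N is then the stated integral, i.e. the W-weighted mean of
  a \<beta>(a) - \<mu> at a = cb.

  For the limit, fix A such that |a \<beta>(a) - \<mu>| is small for a \<ge> A. The range b < A/c carries
  weight at most 2A/c against N(c) \<ge> exp(-B(c))/2, so its share is O(exp(B(c))/c). This tends
  to 0 because a \<beta>(a) \<rightarrow> \<mu> < 1 forces B(c) \<le> \<gamma> ln c + O(1) for some \<gamma> < 1.
\<close>

lemma negligible_countable:
  fixes S :: "'a::euclidean_space set"
  assumes "countable S"
  shows "negligible S"
proof -
  have "negligible (\<Union>x\<in>S. {x})"
    using assms by (intro negligible_countable_Union) auto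
  then show ?thesis by simp
qed

lemma abs_exp_minus_diff_le:
  fixes u v :: real
  assumes "0 \<le> u" "0 \<le> v"
  shows "\<bar>exp (- u) - exp (- v)\<bar> \<le> \<bar>u - v\<bar>"
proof -
  have *: "exp (- u) - exp (- v) \<le> v - u" if "0 \<le> u" "u \<le> v" for u v :: real
  proof -
    have "exp (- u) - exp (- v) = exp (- u) * (1 - exp (- (v - u)))"
      by (simp add: algebra_simps flip: exp_add)
    also have "\<dots> \<le> 1 * (v - u)"
      using that exp_ge_add_one_self[of "- (v - u)"] by (intro mult_mono) (auto simp: algebra_simps)
    finally show ?thesis by simp
  qed
  show ?thesis
    using *[of u v] *[of v u] assms by (cases "u \<le> v") auto
qed

lemma has_real_derivative_integral_dominated:
  fixes f :: "real \<Rightarrow> 'a::euclidean_space \<Rightarrow> real"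
  assumes r: "0 < r"
    and f_int: "\<And>x. \<bar>x - c\<bar> < r \<Longrightarrow> f x integrable_on S"
    and g_int: "g integrable_on S"
    and lipschitz: "\<And>x b. \<bar>x - c\<bar> < r \<Longrightarrow> b \<in> S \<Longrightarrow> \<bar>f x b - f c b\<bar> \<le> \<bar>x - c\<bar> * g b"
    and N: "negligible N"
    and deriv: "\<And>b. b \<in> S - N \<Longrightarrow> ((\<lambda>x. f x b) has_real_derivative f' b) (at c)"
  shows "f' integrable_on S"
    and "((\<lambda>x. integral S (f x)) has_real_derivative integral S f') (at c)"
proof -
  define q where "q h = (\<lambda>b. (f (c + h) b - f c b) / h)" for h
  have spike: "integral (S - N) \<phi> = integral S \<phi>" "\<phi> integrable_on S - N \<longleftrightarrow> \<phi> integrable_on S"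
    for \<phi> :: "'a \<Rightarrow> real"
    using N by (auto intro!: integral_spike_set integrable_spike_set_eq intro: negligible_subset)
  have quotient: "(integral S (f (c + h)) - integral S (f c)) / h = integral S (q h)"
    if "\<bar>h\<bar> < r" for h
    using that r f_int[of "c + h"] f_int[of c] by (simp add: q_def integral_diff integral_divide)
  have limit: "f' integrable_on S \<and> (\<lambda>i. integral S (q (X i))) \<longlonglongrightarrow> integral S f'"
    if X: "\<And>i. X i \<in> ball 0 r - {0}" "X \<longlonglongrightarrow> 0" for X
  proof -
    have Xr: "\<bar>X i\<bar> < r" "X i \<noteq> 0" for i
      using X(1)[of i] by auto
    have "q (X i) integrable_on S - N" for i
      using Xr f_int[of "c + X i"] f_int[of c] r spike
      by (auto simp: q_def intro!: integrable_on_divide integrable_diff)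
    moreover have "g integrable_on S - N"
      using g_int spike by simp
    moreover have "norm (q (X i) b) \<le> g b" if "b \<in> S - N" for i b
      using lipschitz[of "c + X i" b] Xr[of i] that
      by (simp add: q_def abs_divide divide_le_eq mult.commute)
    moreover have "(\<lambda>i. q (X i) b) \<longlonglongrightarrow> f' b" if "b \<in> S - N" for b
    proof -
      have "((\<lambda>h. (f (c + h) b - f c b) / h) \<longlongrightarrow> f' b) (at 0)"
        using deriv[OF that] by (simp add: DERIV_def)
      moreover have "filterlim X (at 0) sequentially"
        using X Xr by (intro filterlim_atI) auto
      ultimately show ?thesis
        unfolding q_def by (rule filterlim_compose)
    qed
    ultimately show ?thesis
      using dominated_convergence[of "\<lambda>i. q (X i)" "S - N" g f'] spike by simp
  qed
  define X0 where "X0 i = r / 2 / real (Suc i)" for i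
  have "X0 \<longlonglongrightarrow> 0"
    unfolding X0_def using lim_const_over_n[of "r / 2"] LIMSEQ_Suc by blast
  moreover have "X0 i \<in> ball 0 r - {0}" for i
    using r by (auto simp: X0_def field_simps add_pos_nonneg)
  ultimately show "f' integrable_on S"
    using limit by blast
  have "((\<lambda>h. (integral S (f (c + h)) - integral S (f c)) / h) \<longlongrightarrow> integral S f') (at 0 within ball 0 r)"
  proof (subst tendsto_at_iff_sequentially, intro allI impI)
    fix X :: "nat \<Rightarrow> real"
    assume X: "\<forall>i. X i \<in> ball 0 r - {0}" "X \<longlonglongrightarrow> 0"
    then have "(\<lambda>h. (integral S (f (c + h)) - integral S (f c)) / h) \<circ> X = (\<lambda>i. integral S (q (X i)))"
      by (auto simp: quotient)
    then show "((\<lambda>h. (integral S (f (c + h)) - integral S (f c)) / h) \<circ> X) \<longlonglongrightarrow> integral S f'"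
      using limit[of X] X by simp
  qed
  moreover have "at (0::real) within ball 0 r = at 0"
    using r by (intro at_within_open) auto
  ultimately show "((\<lambda>x. integral S (f x)) has_real_derivative integral S f') (at c)"
    by (simp add: DERIV_def)
qed


lemma powr_one_minus_absolutely_integrable:
  fixes \<mu> :: real
  assumes "0 < \<mu>"
  shows "(\<lambda>b. (1 - b) powr (\<mu> - 1)) absolutely_integrable_on {0..1}"
proof -
  have "(\<lambda>b. b powr (\<mu> - 1)) integrable_on cbox 0 1"
    using integrable_on_powr_from_0[of "\<mu> - 1" 1] assms by simp
  from integrable_affinity[OF this, of "-1" 1]
  have "(\<lambda>b. (1 - b) powr (\<mu> - 1)) integrable_on {0..1}"
    by simp
  then show ?thesis
    by (subst absolutely_integrable_on_iff_nonneg) auto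
qed

lemma log_deriv_inverse:
  fixes f g :: "real \<Rightarrow> real"
  assumes f: "(f has_real_derivative f') (at x)" "f x \<noteq> 0"
    and S: "open S" "x \<in> S" "\<And>y. y \<in> S \<Longrightarrow> g y = inverse (f y)"
  shows "g differentiable (at x)" and "deriv g x / g x = - f' / f x"
proof -
  have g': "(g has_real_derivative - (f' * inverse (f x ^ 2))) (at x)"
    using has_field_derivative_transform_within_open[OF DERIV_inverse_fun[OF f] S(1,2)] S(3)
    by (simp add: eval_nat_numeral)
  then show "g differentiable (at x)"
    unfolding differentiable_def has_field_derivative_def by blast
  show "deriv g x / g x = - f' / f x"
    using DERIV_imp_deriv[OF g'] S(2,3) f(2) by (simp add: power2_eq_square field_simps)
qed

definition weight :: "(real \<Rightarrow> real) \<Rightarrow> real \<Rightarrow> real \<Rightarrow> real \<Rightarrow> real" where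
  "weight \<beta> \<mu> c b = exp (- Bint \<beta> (c * b)) * (1 - b) powr (\<mu> - 1)"

definition normalizer :: "(real \<Rightarrow> real) \<Rightarrow> real \<Rightarrow> real \<Rightarrow> real" where
  "normalizer \<beta> \<mu> c = integral {0..1} (weight \<beta> \<mu> c)"

lemma weight_nonneg: "0 \<le> weight \<beta> \<mu> c b"
  by (simp add: weight_def)

lemma Wfun_eq_weight: "Wfun \<beta> \<mu> C \<tau> = (\<lambda>b. C \<tau> * weight \<beta> \<mu> (exp \<tau>) b)"
  by (simp add: fun_eq_iff Wfun_def weight_def)

locale antitone_rate =
  fixes \<beta> :: "real \<Rightarrow> real"
  assumes nonneg: "0 \<le> a \<Longrightarrow> 0 \<le> \<beta> a"
    and antitone: "0 \<le> x \<Longrightarrow> x \<le> y \<Longrightarrow> \<beta> y \<le> \<beta> x"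
begin

lemma integrable_on_Icc: "0 \<le> a \<Longrightarrow> \<beta> integrable_on {a..b}"
proof -
  assume "0 \<le> a"
  then have "mono_on {a..b} (\<lambda>x. - \<beta> x)"
    by (auto simp: mono_on_def intro: antitone)
  then show ?thesis
    using integrable_neg[OF integrable_on_mono_on] by fastforce
qed

lemma Bint_diff: "0 \<le> x \<Longrightarrow> x \<le> y \<Longrightarrow> Bint \<beta> y - Bint \<beta> x = integral {x..y} \<beta>"
  using Henstock_Kurzweil_Integration.integral_combine[where a=0 and c=x and b=y and f=\<beta>]
    integrable_on_Icc[of 0 y]
  by (simp add: Bint_def)

lemma Bint_mono:
  assumes "0 \<le> x" "x \<le> y"
  shows "Bint \<beta> x \<le> Bint \<beta> y"
proof -
  have "0 \<le> integral {x..y} \<beta>"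
    using assms integrable_on_Icc[of x y] nonneg by (intro integral_nonneg) auto
  then show ?thesis
    using Bint_diff[OF assms] by simp
qed

lemma Bint_nonneg: "0 \<le> x \<Longrightarrow> 0 \<le> Bint \<beta> x"
  using Bint_mono[of 0 x] by (simp add: Bint_def)

lemma lipschitz_on_Bint: "(\<beta> 0)-lipschitz_on {0..} (Bint \<beta>)"
proof (rule lipschitz_on_leI)
  fix x y :: real
  assume xy: "x \<in> {0..}" "y \<in> {0..}" "x \<le> y"
  have "integral {x..y} \<beta> \<le> integral {x..y} (\<lambda>_. \<beta> 0)"
    using xy integrable_on_Icc[of x y] antitone[of 0] by (intro integral_le) auto
  then show "dist (Bint \<beta> x) (Bint \<beta> y) \<le> \<beta> 0 * dist x y"
    using Bint_diff[of x y] Bint_mono[of x y] xy by (simp add: dist_real_def mult.commute)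
qed (use nonneg in auto)

lemma Bint_has_real_derivative:
  assumes "0 < x" "isCont \<beta> x"
  shows "(Bint \<beta> has_real_derivative \<beta> x) (at x)"
proof -
  have "((\<lambda>u. integral {0..u} \<beta>) has_vector_derivative \<beta> x) (at x within {0..x + 1})"
    using assms integrable_on_Icc
    by (intro integral_has_vector_derivative_continuous_at[where S="{}", simplified])
       (auto intro: continuous_at_imp_continuous_within)
  moreover have "at x within {0..x + 1} = at x"
    using assms by (intro at_within_interior) auto
  ultimately show ?thesis
    by (simp add: Bint_def[abs_def] has_real_derivative_iff_has_vector_derivative)
qed

lemma countable_discontinuities: "countable {a. 0 < a \<and> \<not> isCont \<beta> a}"
proof -
  have "mono_on {0..} (\<lambda>x. - \<beta> x)"
    by (auto simp: mono_on_def intro: antitone)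
  then have "countable {a\<in>{0..}. \<not> continuous (at a within {0..}) (\<lambda>x. - \<beta> x)}"
    by (rule mono_on_ctble_discont)
  moreover have "{a. 0 < a \<and> \<not> isCont \<beta> a}
      \<subseteq> {a\<in>{0..}. \<not> continuous (at a within {0..}) (\<lambda>x. - \<beta> x)}"
  proof safe
    fix a
    assume "0 < a" "\<not> isCont \<beta> a" "continuous (at a within {0..}) (\<lambda>x. - \<beta> x)"
    moreover have "at a within {0..} = at a"
      using \<open>0 < a\<close> by (intro at_within_interior) auto
    ultimately show False
      using continuous_minus[of "at a" "\<lambda>x. - \<beta> x"] by simp
  qed simp
  ultimately show ?thesis
    by (rule countable_subset[rotated])
qed

lemma weight_absolutely_integrable:
  assumes "0 < \<mu>" "0 \<le> c"
  shows "weight \<beta> \<mu> c absolutely_integrable_on {0..1}"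
proof -
  have "continuous_on {0..1} (\<lambda>b. Bint \<beta> (c * b))"
    using assms by (intro continuous_on_compose2[OF lipschitz_on_continuous_on[OF lipschitz_on_Bint]]
        continuous_intros) auto
  then have "continuous_on {0..1} (\<lambda>b. exp (- Bint \<beta> (c * b)))"
    by (intro continuous_intros)
  then have "(\<lambda>b. exp (- Bint \<beta> (c * b))) \<in> borel_measurable (lebesgue_on {0..1})"
    by (rule continuous_imp_measurable_on_sets_lebesgue) auto
  moreover have "bounded ((\<lambda>b. exp (- Bint \<beta> (c * b))) ` {0..1})"
  proof (rule bounded_subset[OF bounded_closed_interval[of 0 1]])
    show "(\<lambda>b. exp (- Bint \<beta> (c * b))) ` {0..1} \<subseteq> {0..1}"
      using assms Bint_nonneg[of "c * _"] by auto
  qed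
  ultimately show ?thesis
    using absolutely_integrable_bounded_measurable_product_real[OF _ _ _
          powr_one_minus_absolutely_integrable[OF assms(1)]]
    by (simp add: weight_def[abs_def])
qed

lemma negligible_discontinuities_scaled:
  assumes "0 < c"
  shows "negligible {b. 0 < b \<and> \<not> isCont \<beta> (c * b)}"
proof -
  have "{b. 0 < b \<and> \<not> isCont \<beta> (c * b)} \<subseteq> (\<lambda>a. a / c) ` {a. 0 < a \<and> \<not> isCont \<beta> a}"
  proof
    fix b
    assume "b \<in> {b. 0 < b \<and> \<not> isCont \<beta> (c * b)}"
    then show "b \<in> (\<lambda>a. a / c) ` {a. 0 < a \<and> \<not> isCont \<beta> a}"
      using assms by (intro image_eqI[of _ _ "c * b"]) auto
  qed
  then show ?thesis
    using countable_subset[OF _ countable_image[OF countable_discontinuities]]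
    by (intro negligible_countable) simp
qed

lemma weight_lipschitz:
  assumes "0 \<le> x" "0 \<le> c" "b \<in> {0..1}"
  shows "\<bar>weight \<beta> \<mu> x b - weight \<beta> \<mu> c b\<bar> \<le> \<bar>x - c\<bar> * (\<beta> 0 * (1 - b) powr (\<mu> - 1))"
proof -
  have "\<bar>exp (- Bint \<beta> (x * b)) - exp (- Bint \<beta> (c * b))\<bar> \<le> \<bar>Bint \<beta> (x * b) - Bint \<beta> (c * b)\<bar>"
    using assms by (intro abs_exp_minus_diff_le Bint_nonneg) auto
  also have "\<dots> \<le> \<beta> 0 * (\<bar>x - c\<bar> * b)"
    using lipschitz_onD[OF lipschitz_on_Bint, of "x * b" "c * b"] assms
    by (simp add: dist_real_def abs_mult flip: left_diff_distrib)
  also have "\<dots> \<le> \<bar>x - c\<bar> * \<beta> 0"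
    using assms nonneg[of 0] mult_left_le[of b "\<bar>x - c\<bar> * \<beta> 0"] by (simp add: algebra_simps)
  finally have "\<bar>exp (- Bint \<beta> (x * b)) - exp (- Bint \<beta> (c * b))\<bar> * (1 - b) powr (\<mu> - 1)
      \<le> \<bar>x - c\<bar> * \<beta> 0 * (1 - b) powr (\<mu> - 1)"
    by (rule mult_right_mono) simp
  then show ?thesis
    by (simp add: weight_def abs_mult mult.assoc flip: left_diff_distrib)
qed

lemma weight_has_real_derivative:
  assumes "0 < c * b" "isCont \<beta> (c * b)"
  shows "((\<lambda>x. weight \<beta> \<mu> x b) has_real_derivative - (b * \<beta> (c * b) * weight \<beta> \<mu> c b)) (at c)"
proof -
  from Bint_has_real_derivative[OF assms]
  have "((\<lambda>x. Bint \<beta> (x * b)) has_real_derivative \<beta> (c * b) * b) (at c)"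
    by (rule DERIV_chain2[of "Bint \<beta>"]) (auto intro!: derivative_eq_intros)
  then show ?thesis
    unfolding weight_def by (auto intro!: derivative_eq_intros)
qed

lemma normalizer_has_real_derivative:
  assumes "0 < \<mu>" "0 < c"
  shows "(\<lambda>b. b * \<beta> (c * b) * weight \<beta> \<mu> c b) integrable_on {0..1}"
    and "(normalizer \<beta> \<mu> has_real_derivative
           - integral {0..1} (\<lambda>b. b * \<beta> (c * b) * weight \<beta> \<mu> c b)) (at c)"
proof -
  define N where "N = insert 0 {b. 0 < b \<and> \<not> isCont \<beta> (c * b)}"
  have negligible: "negligible N"
    using negligible_discontinuities_scaled[OF assms(2)] by (simp add: N_def)
  have integrable: "weight \<beta> \<mu> x integrable_on {0..1}" if "\<bar>x - c\<bar> < c" for x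
    using that weight_absolutely_integrable[OF assms(1), of x]
    by (simp add: set_lebesgue_integral_eq_integral(1))
  have dominant: "(\<lambda>b. \<beta> 0 * (1 - b) powr (\<mu> - 1)) integrable_on {0..1}"
    using set_lebesgue_integral_eq_integral(1)[OF powr_one_minus_absolutely_integrable[OF assms(1)]]
    by (rule integrable_on_mult_right)
  have lipschitz: "\<bar>weight \<beta> \<mu> x b - weight \<beta> \<mu> c b\<bar> \<le> \<bar>x - c\<bar> * (\<beta> 0 * (1 - b) powr (\<mu> - 1))"
    if "\<bar>x - c\<bar> < c" "b \<in> {0..1}" for x b
    using that by (intro weight_lipschitz) auto
  have derivative: "((\<lambda>x. weight \<beta> \<mu> x b) has_real_derivative - (b * \<beta> (c * b) * weight \<beta> \<mu> c b)) (at c)"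
    if "b \<in> {0..1} - N" for b
    using that assms by (intro weight_has_real_derivative) (auto simp: N_def)
  note has_real_derivative_integral_dominated[OF assms(2) integrable dominant lipschitz
      negligible derivative]
  then have "(\<lambda>b. - (b * \<beta> (c * b) * weight \<beta> \<mu> c b)) integrable_on {0..1}"
    and "(normalizer \<beta> \<mu> has_real_derivative
           integral {0..1} (\<lambda>b. - (b * \<beta> (c * b) * weight \<beta> \<mu> c b))) (at c)"
    by (simp_all add: normalizer_def[abs_def])
  then show "(\<lambda>b. b * \<beta> (c * b) * weight \<beta> \<mu> c b) integrable_on {0..1}"
    and "(normalizer \<beta> \<mu> has_real_derivative
           - integral {0..1} (\<lambda>b. b * \<beta> (c * b) * weight \<beta> \<mu> c b)) (at c)"
    using integrable_neg[of "\<lambda>b. - (b * \<beta> (c * b) * weight \<beta> \<mu> c b)"] by auto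
qed

lemma normalizer_lower_bound:
  assumes "0 < \<mu>" "\<mu> \<le> 2" "0 \<le> c"
  shows "exp (- Bint \<beta> c) / 2 \<le> normalizer \<beta> \<mu> c"
proof -
  have "((\<lambda>b. 1 - b) has_integral (1 - 1\<^sup>2 / 2) - (0 - 0\<^sup>2 / 2)) {0..1::real}"
    by (intro fundamental_theorem_of_calculus[where f="\<lambda>b. b - b\<^sup>2 / 2"])
       (auto intro!: derivative_eq_intros simp flip: has_real_derivative_iff_has_vector_derivative)
  then have "((\<lambda>b. 1 - b) has_integral 1 / 2) {0..1::real}"
    by simp
  from has_integral_mult_right[OF this, of "exp (- Bint \<beta> c)"]
  have lower: "((\<lambda>b. exp (- Bint \<beta> c) * (1 - b)) has_integral exp (- Bint \<beta> c) / 2) {0..1}"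
    by simp
  have integrable: "weight \<beta> \<mu> c integrable_on {0..1}"
    using weight_absolutely_integrable[OF assms(1,3)] by (simp add: set_lebesgue_integral_eq_integral(1))
  have le: "exp (- Bint \<beta> c) * (1 - b) \<le> weight \<beta> \<mu> c b" if "b \<in> {0..1}" for b
  proof -
    have "Bint \<beta> (c * b) \<le> Bint \<beta> c"
      using that assms by (intro Bint_mono) (auto simp: mult_left_le)
    moreover have "1 - b \<le> (1 - b) powr (\<mu> - 1)"
    proof (cases "b = 1")
      case False
      then have "(1 - b) powr 1 \<le> (1 - b) powr (\<mu> - 1)"
        using that assms by (intro powr_mono') auto
      then show ?thesis
        using that by simp
    qed simp
    ultimately show ?thesis
      using that unfolding weight_def by (intro mult_mono) auto
  qed
  show ?thesis
    unfolding normalizer_def using has_integral_le[OF lower integrable_integral[OF integrable] le] .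
qed

lemma normalizer_pos:
  assumes "0 < \<mu>" "\<mu> \<le> 2" "0 \<le> c"
  shows "0 < normalizer \<beta> \<mu> c"
  using normalizer_lower_bound[OF assms] exp_gt_zero[of "- Bint \<beta> c"] by linarith

lemma deviation_integral:
  assumes "0 < \<mu>" "0 < c"
  shows "(\<lambda>b. (c * b * \<beta> (c * b) - \<mu>) * weight \<beta> \<mu> c b) integrable_on {0..1}"
    and "integral {0..1} (\<lambda>b. (c * b * \<beta> (c * b) - \<mu>) * weight \<beta> \<mu> c b)
           = c * integral {0..1} (\<lambda>b. b * \<beta> (c * b) * weight \<beta> \<mu> c b) - \<mu> * normalizer \<beta> \<mu> c"
proof -
  have "(\<lambda>b. (c * b * \<beta> (c * b) - \<mu>) * weight \<beta> \<mu> c b)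
      = (\<lambda>b. c * (b * \<beta> (c * b) * weight \<beta> \<mu> c b) - \<mu> * weight \<beta> \<mu> c b)"
    by (simp add: fun_eq_iff algebra_simps)
  moreover have "(\<lambda>b. c * (b * \<beta> (c * b) * weight \<beta> \<mu> c b)) integrable_on {0..1}"
    using normalizer_has_real_derivative(1)[OF assms] by (rule integrable_on_mult_right)
  moreover have "(\<lambda>b. \<mu> * weight \<beta> \<mu> c b) integrable_on {0..1}"
    using weight_absolutely_integrable[OF assms(1), of c] assms
    by (intro integrable_on_mult_right) (simp add: set_lebesgue_integral_eq_integral(1))
  ultimately show "(\<lambda>b. (c * b * \<beta> (c * b) - \<mu>) * weight \<beta> \<mu> c b) integrable_on {0..1}"
    and "integral {0..1} (\<lambda>b. (c * b * \<beta> (c * b) - \<mu>) * weight \<beta> \<mu> c b)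
           = c * integral {0..1} (\<lambda>b. b * \<beta> (c * b) * weight \<beta> \<mu> c b) - \<mu> * normalizer \<beta> \<mu> c"
    by (simp_all add: integrable_diff integral_diff normalizer_def)
qed

lemma weight_le_two:
  assumes "0 \<le> \<mu>" "\<mu> \<le> 1" "0 \<le> c" "0 \<le> b" "b \<le> 1 / 2"
  shows "weight \<beta> \<mu> c b \<le> 2"
proof -
  have "(1 - b) powr (\<mu> - 1) \<le> (1 / 2) powr (\<mu> - 1)"
    using assms by (intro powr_mono2') auto
  also have "\<dots> = 2 powr (1 - \<mu>)"
    by (simp add: powr_divide powr_minus_divide powr_diff)
  also have "\<dots> \<le> 2 powr 1"
    using assms by (intro powr_mono) auto
  finally have "(1 - b) powr (\<mu> - 1) \<le> 2"
    by simp
  moreover have "exp (- Bint \<beta> (c * b)) \<le> 1"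
    using assms Bint_nonneg[of "c * b"] by simp
  ultimately show ?thesis
    unfolding weight_def using mult_mono[of "exp (- Bint \<beta> (c * b))" 1 "(1 - b) powr (\<mu> - 1)" 2]
    by simp
qed

lemma Bint_le_log:
  assumes A: "0 < A" "A \<le> x" and slope: "\<And>a. A \<le> a \<Longrightarrow> a * \<beta> a \<le> \<gamma>"
  shows "Bint \<beta> x \<le> Bint \<beta> A + \<gamma> * (ln x - ln A)"
proof -
  have log: "((\<lambda>a. \<gamma> / a) has_integral \<gamma> * ln x - \<gamma> * ln A) {A..x}"
    using A by (intro fundamental_theorem_of_calculus)
      (auto intro!: derivative_eq_intros simp: field_simps
        simp flip: has_real_derivative_iff_has_vector_derivative)
  have "integral {A..x} \<beta> \<le> integral {A..x} (\<lambda>a. \<gamma> / a)"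
  proof (rule integral_le)
    show "\<beta> integrable_on {A..x}"
      using A by (intro integrable_on_Icc) auto
    show "(\<lambda>a. \<gamma> / a) integrable_on {A..x}"
      using log by blast
  next
    fix a
    assume "a \<in> {A..x}"
    then show "\<beta> a \<le> \<gamma> / a"
      using A slope[of a] by (simp add: field_simps)
  qed
  then show ?thesis
    using Bint_diff[of A x] A integral_unique[OF log] by (simp add: algebra_simps)
qed

lemma exp_Bint_divide_tendsto_0:
  assumes lim: "((\<lambda>a. a * \<beta> a) \<longlongrightarrow> \<mu>) at_top" and "\<mu> < 1"
  shows "((\<lambda>x. exp (Bint \<beta> x) / x) \<longlongrightarrow> 0) at_top"
proof -
  define \<gamma> where "\<gamma> = (1 + \<mu>) / 2"
  have \<gamma>: "\<mu> < \<gamma>" "\<gamma> < 1"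
    using assms by (auto simp: \<gamma>_def)
  obtain A0 where "\<And>a. A0 \<le> a \<Longrightarrow> a * \<beta> a < \<gamma>"
    using order_tendstoD(2)[OF lim \<gamma>(1)] by (auto simp: eventually_at_top_linorder)
  then obtain A where A: "1 \<le> A" "\<And>a. A \<le> a \<Longrightarrow> a * \<beta> a \<le> \<gamma>"
    by (metis less_imp_le max.cobounded1 max.cobounded2 order_trans)
  define K where "K = exp (Bint \<beta> A - \<gamma> * ln A)"
  have bound: "exp (Bint \<beta> x) / x \<le> K * x powr (\<gamma> - 1)" if "A \<le> x" for x
  proof -
    have "0 < x"
      using that A by auto
    have "exp (Bint \<beta> x) \<le> exp (Bint \<beta> A - \<gamma> * ln A) * exp (\<gamma> * ln x)"
      using Bint_le_log[of A x \<gamma>] that A by (simp add: algebra_simps flip: exp_add)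
    then have "exp (Bint \<beta> x) \<le> K * x powr \<gamma>"
      using \<open>0 < x\<close> by (simp add: K_def powr_def)
    then show ?thesis
      using \<open>0 < x\<close> by (simp add: powr_diff divide_right_mono)
  qed
  have "eventually (\<lambda>x. 0 \<le> exp (Bint \<beta> x) / x) at_top"
    using eventually_gt_at_top[of 0] by eventually_elim simp
  moreover have "eventually (\<lambda>x. exp (Bint \<beta> x) / x \<le> K * x powr (\<gamma> - 1)) at_top"
    using bound eventually_at_top_linorder by blast
  moreover have "((\<lambda>x. K * x powr (\<gamma> - 1)) \<longlongrightarrow> 0) at_top"
    using \<gamma> by (intro tendsto_mult_right_zero tendsto_neg_powr filterlim_ident) auto
  ultimately show ?thesis
    by (rule tendsto_sandwich[OF _ _ tendsto_const])
qed

lemma times_deviation_bounded: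
  assumes lim: "((\<lambda>a. a * \<beta> a) \<longlongrightarrow> \<mu>) at_top"
  obtains K where "0 < K" "\<And>a. 0 \<le> a \<Longrightarrow> \<bar>a * \<beta> a - \<mu>\<bar> \<le> K"
proof -
  obtain A0 where "\<And>a. A0 \<le> a \<Longrightarrow> \<bar>a * \<beta> a - \<mu>\<bar> < 1"
    using tendstoD[OF lim, of 1] by (auto simp: eventually_at_top_linorder dist_real_def)
  then obtain A where A: "0 \<le> A" "\<And>a. A \<le> a \<Longrightarrow> \<bar>a * \<beta> a - \<mu>\<bar> < 1"
    by (metis max.cobounded1 max.cobounded2 order_trans)
  have "0 \<le> A * \<beta> 0"
    using A(1) nonneg[of 0] by simp
  have "\<bar>a * \<beta> a - \<mu>\<bar> \<le> A * \<beta> 0 + \<bar>\<mu>\<bar> + 1" if "0 \<le> a" for a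
  proof (cases "a < A")
    case True
    then have "a * \<beta> a \<le> A * \<beta> 0"
      using that nonneg[of a] antitone[of 0 a] by (intro mult_mono) auto
    moreover have "0 \<le> a * \<beta> a"
      using that nonneg[of a] by simp
    ultimately show ?thesis
      unfolding abs_le_iff using abs_ge_self[of \<mu>] abs_ge_minus_self[of \<mu>] by linarith
  next
    case False
    then show ?thesis
      using A(2)[of a] \<open>0 \<le> A * \<beta> 0\<close> by linarith
  qed
  moreover have "0 < A * \<beta> 0 + \<bar>\<mu>\<bar> + 1"
    using \<open>0 \<le> A * \<beta> 0\<close> by simp
  ultimately show ?thesis
    using that by blast
qed

lemma weighted_integral_bound:
  fixes \<phi> :: "real \<Rightarrow> real"
  assumes \<mu>: "0 < \<mu>" "\<mu> \<le> 1" and A: "0 < A" "2 * A \<le> c"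
    and bounded: "\<And>a. 0 \<le> a \<Longrightarrow> \<bar>\<phi> a\<bar> \<le> K"
    and small: "\<And>a. A \<le> a \<Longrightarrow> \<bar>\<phi> a\<bar> \<le> \<epsilon>"
    and integrable: "(\<lambda>b. \<phi> (c * b) * weight \<beta> \<mu> c b) integrable_on {0..1}"
  shows "\<bar>integral {0..1} (\<lambda>b. \<phi> (c * b) * weight \<beta> \<mu> c b)\<bar>
           \<le> \<epsilon> * normalizer \<beta> \<mu> c + 2 * K * A / c"
proof -
  define F where "F = (\<lambda>b. \<phi> (c * b) * weight \<beta> \<mu> c b)"
  define d where "d = A / c"
  have c: "0 < c"
    using A by simp
  have d: "0 < d" "d \<le> 1 / 2"
    using A c by (auto simp: d_def field_simps)
  have "0 \<le> \<epsilon>" "0 \<le> K"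
    using small[of A] bounded[of 0] by auto
  have w_int: "weight \<beta> \<mu> c integrable_on {0..1}"
    using weight_absolutely_integrable[OF \<mu>(1)] c
    by (simp add: set_lebesgue_integral_eq_integral(1))
  have abs_F: "\<bar>F b\<bar> = \<bar>\<phi> (c * b)\<bar> * weight \<beta> \<mu> c b" for b
    by (simp add: F_def abs_mult weight_nonneg)
  have "norm (integral {d..1} F) \<le> integral {d..1} (\<lambda>b. \<epsilon> * weight \<beta> \<mu> c b)"
  proof (rule integral_norm_bound_integral)
    show "F integrable_on {d..1}" "(\<lambda>b. \<epsilon> * weight \<beta> \<mu> c b) integrable_on {d..1}"
      using d integrable w_int
      by (auto simp: F_def intro: integrable_subinterval_real integrable_on_mult_right)
  next
    fix b
    assume "b \<in> {d..1}"
    then have "A \<le> c * b"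
      using c by (auto simp: d_def field_simps)
    then show "norm (F b) \<le> \<epsilon> * weight \<beta> \<mu> c b"
      unfolding real_norm_def abs_F using small weight_nonneg by (intro mult_right_mono) auto
  qed
  also have "\<dots> \<le> \<epsilon> * normalizer \<beta> \<mu> c"
    unfolding normalizer_def integral_mult_right using d w_int \<open>0 \<le> \<epsilon>\<close> weight_nonneg
    by (intro mult_left_mono integral_subset_le) (auto intro: integrable_subinterval_real)
  finally have tail: "norm (integral {d..1} F) \<le> \<epsilon> * normalizer \<beta> \<mu> c" .
  have "norm (integral {0..d} F) \<le> integral {0..d} (\<lambda>b. K * 2)"
  proof (rule integral_norm_bound_integral)
    show "F integrable_on {0..d}"
      using d integrable by (auto simp: F_def intro: integrable_subinterval_real)
  next
    fix b
    assume "b \<in> {0..d}"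
    then show "norm (F b) \<le> K * 2"
      unfolding real_norm_def abs_F using bounded[of "c * b"] weight_le_two[of \<mu> c b] \<mu> c d weight_nonneg
      by (intro mult_mono) auto
  qed (simp add: integrable_const_ivl)
  then have head: "norm (integral {0..d} F) \<le> 2 * K * A / c"
    using d by (simp add: d_def mult_ac)
  have "integral {0..1} F = integral {0..d} F + integral {d..1} F"
    using d integrable
    by (intro Henstock_Kurzweil_Integration.integral_combine[symmetric]) (auto simp: F_def)
  then show ?thesis
    using head tail by (simp add: F_def)
qed

lemma weighted_mean_tendsto_0:
  assumes \<mu>: "0 < \<mu>" "\<mu> < 1" and lim: "((\<lambda>a. a * \<beta> a) \<longlongrightarrow> \<mu>) at_top"
  shows "((\<lambda>c. integral {0..1} (\<lambda>b. (c * b * \<beta> (c * b) - \<mu>) * weight \<beta> \<mu> c b)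
                / normalizer \<beta> \<mu> c) \<longlongrightarrow> 0) at_top"
proof (rule tendstoI)
  fix \<epsilon> :: real
  assume "0 < \<epsilon>"
  obtain K where K_pos: "0 < K" and K: "\<And>a. 0 \<le> a \<Longrightarrow> \<bar>a * \<beta> a - \<mu>\<bar> \<le> K"
    using times_deviation_bounded[OF lim] by blast
  obtain A0 where "\<And>a. A0 \<le> a \<Longrightarrow> \<bar>a * \<beta> a - \<mu>\<bar> < \<epsilon> / 2"
    using tendstoD[OF lim, of "\<epsilon> / 2"] \<open>0 < \<epsilon>\<close>
    by (auto simp: eventually_at_top_linorder dist_real_def)
  then obtain A where A: "1 \<le> A" "\<And>a. A \<le> a \<Longrightarrow> \<bar>a * \<beta> a - \<mu>\<bar> \<le> \<epsilon> / 2"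
    by (metis less_imp_le max.cobounded1 max.cobounded2 order_trans)
  have "eventually (\<lambda>c. exp (Bint \<beta> c) / c < \<epsilon> / (8 * K * A)) at_top"
    using order_tendstoD(2)[OF exp_Bint_divide_tendsto_0[OF lim \<mu>(2)]] \<open>0 < \<epsilon>\<close> K_pos A(1)
    by simp
  moreover have "eventually (\<lambda>c. 2 * A \<le> c) at_top"
    by (rule eventually_ge_at_top)
  ultimately show "eventually (\<lambda>c. dist (integral {0..1} (\<lambda>b. (c * b * \<beta> (c * b) - \<mu>) * weight \<beta> \<mu> c b)
                / normalizer \<beta> \<mu> c) 0 < \<epsilon>) at_top"
  proof eventually_elim
    case (elim c)
    define I where "I = integral {0..1} (\<lambda>b. (c * b * \<beta> (c * b) - \<mu>) * weight \<beta> \<mu> c b)"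
    define N where "N = normalizer \<beta> \<mu> c"
    have c: "0 < c"
      using elim A by simp
    have lower: "exp (- Bint \<beta> c) / 2 \<le> N"
      unfolding N_def using \<mu> c by (intro normalizer_lower_bound) auto
    have N: "0 < N" "1 / N \<le> 2 * exp (Bint \<beta> c)"
      using lower normalizer_pos[of \<mu> c] \<mu> c by (simp_all add: N_def exp_minus field_simps)
    have "\<bar>I\<bar> \<le> \<epsilon> / 2 * N + 2 * K * A / c"
      unfolding I_def N_def using \<mu> A K elim(2) deviation_integral(1)[OF \<mu>(1) c]
      by (intro weighted_integral_bound[where \<phi>="\<lambda>a. a * \<beta> a - \<mu>"]) (auto simp: mult.assoc)
    then have "\<bar>I / N\<bar> \<le> \<epsilon> / 2 + 2 * K * A / c * (1 / N)"
      using N by (simp add: field_simps)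
    also have "\<dots> \<le> \<epsilon> / 2 + 2 * K * A / c * (2 * exp (Bint \<beta> c))"
      using N K_pos A c by (intro add_left_mono mult_left_mono) auto
    also have "\<dots> = \<epsilon> / 2 + 4 * K * A * (exp (Bint \<beta> c) / c)"
      by simp
    also have "\<dots> < \<epsilon> / 2 + 4 * K * A * (\<epsilon> / (8 * K * A))"
      using elim(1) K_pos A by (intro add_strict_left_mono mult_strict_left_mono) auto
    also have "\<dots> = \<epsilon>"
      using K_pos A by (simp add: field_simps)
    finally show ?case
      by (simp add: I_def N_def dist_real_def)
  qed
qed

lemma inverse_normalizer_exp_log_deriv:
  assumes \<mu>: "0 < \<mu>" "\<mu> \<le> 2"
    and S: "open S" "\<tau> \<in> S" "\<And>t. t \<in> S \<Longrightarrow> C t = inverse (normalizer \<beta> \<mu> (exp t))"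
  shows "C differentiable (at \<tau>)"
    and "deriv C \<tau> / C \<tau> - \<mu> = integral {0..1} (\<lambda>b. (exp \<tau> * b * \<beta> (exp \<tau> * b) - \<mu>) * weight \<beta> \<mu> (exp \<tau>) b)
                                / normalizer \<beta> \<mu> (exp \<tau>)"
proof -
  define c where "c = exp \<tau>"
  define J where "J = integral {0..1} (\<lambda>b. b * \<beta> (c * b) * weight \<beta> \<mu> c b)"
  have c: "0 < c"
    by (simp add: c_def)
  have deriv_N: "((\<lambda>t. normalizer \<beta> \<mu> (exp t)) has_real_derivative - J * c) (at \<tau>)"
    using DERIV_chain2[OF normalizer_has_real_derivative(2)[OF \<mu>(1) c, unfolded c_def] DERIV_exp]
    by (simp add: J_def c_def)
  have N: "0 < normalizer \<beta> \<mu> c"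
    using normalizer_pos[OF \<mu>] c by simp
  then have N_exp: "normalizer \<beta> \<mu> (exp \<tau>) \<noteq> 0"
    by (simp add: c_def)
  have "integral {0..1} (\<lambda>b. (c * b * \<beta> (c * b) - \<mu>) * weight \<beta> \<mu> c b)
      = c * J - \<mu> * normalizer \<beta> \<mu> c"
    unfolding J_def using deviation_integral(2)[OF \<mu>(1) c] .
  moreover have "deriv C \<tau> / C \<tau> = c * J / normalizer \<beta> \<mu> c"
    using log_deriv_inverse(2)[OF deriv_N N_exp S] by (simp add: c_def)
  ultimately show "deriv C \<tau> / C \<tau> - \<mu> = integral {0..1} (\<lambda>b. (exp \<tau> * b * \<beta> (exp \<tau> * b) - \<mu>) * weight \<beta> \<mu> (exp \<tau>) b)
                                / normalizer \<beta> \<mu> (exp \<tau>)"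
    using N by (simp add: c_def diff_divide_distrib)
  show "C differentiable (at \<tau>)"
    by (rule log_deriv_inverse(1)[OF deriv_N N_exp S])
qed

end

theorem lemma3:
  fixes \<beta> C :: "real \<Rightarrow> real" and \<mu> :: real
  assumes mu: "0 < \<mu>" "\<mu> < 1"
    and beta_pos: "\<And>a. 0 \<le> a \<Longrightarrow> 0 < \<beta> a"
    and beta_bdd: "\<exists>M. \<forall>a\<ge>0. \<beta> a \<le> M"
    and beta_mono: "\<And>x y. 0 \<le> x \<Longrightarrow> x \<le> y \<Longrightarrow> \<beta> y \<le> \<beta> x"
    and beta_lim: "((\<lambda>a. a * \<beta> a) \<longlongrightarrow> \<mu>) at_top"
    and C_pos: "\<And>\<tau>. 0 \<le> \<tau> \<Longrightarrow> 0 < C \<tau>"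
    and C_norm: "\<And>\<tau>. 0 \<le> \<tau> \<Longrightarrow> integral {0..1} (Wfun \<beta> \<mu> C \<tau>) = 1"
  shows "(\<forall>\<tau>>0. C differentiable (at \<tau>)
            \<and> C \<tau> * delta \<mu> C \<tau> = deriv C \<tau> / C \<tau> - \<mu>
            \<and> deriv C \<tau> / C \<tau> - \<mu>
                = integral {0..1} (\<lambda>b. (b * exp \<tau> * \<beta> (exp \<tau> * b) - \<mu>) * Wfun \<beta> \<mu> C \<tau> b))
         \<and> ((\<lambda>\<tau>. C \<tau> * delta \<mu> C \<tau>) \<longlongrightarrow> 0) at_top"
proof -
  interpret antitone_rate \<beta>
    using beta_pos beta_mono by unfold_locales (auto simp: less_imp_le)
  define M where "M c = integral {0..1} (\<lambda>b. (c * b * \<beta> (c * b) - \<mu>) * weight \<beta> \<mu> c b)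
                          / normalizer \<beta> \<mu> c" for c
  have C_eq: "C \<tau> = inverse (normalizer \<beta> \<mu> (exp \<tau>))" if "0 \<le> \<tau>" for \<tau>
    using C_norm[OF that] inverse_unique[of "normalizer \<beta> \<mu> (exp \<tau>)" "C \<tau>"]
    by (simp add: Wfun_eq_weight normalizer_def mult.commute)
  have log_deriv: "C differentiable (at \<tau>)" "deriv C \<tau> / C \<tau> - \<mu> = M (exp \<tau>)" if "0 < \<tau>" for \<tau>
    using inverse_normalizer_exp_log_deriv[of \<mu> "{0<..}" \<tau> C] that mu C_eq
    unfolding M_def by auto
  have delta_eq: "C \<tau> * delta \<mu> C \<tau> = deriv C \<tau> / C \<tau> - \<mu>" if "0 < \<tau>" for \<tau>
    using C_pos[of \<tau>] that by (simp add: delta_def power2_eq_square field_simps)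
  have weighted: "integral {0..1} (\<lambda>b. (b * exp \<tau> * \<beta> (exp \<tau> * b) - \<mu>) * Wfun \<beta> \<mu> C \<tau> b)
      = M (exp \<tau>)" if "0 \<le> \<tau>" for \<tau>
  proof -
    have "(\<lambda>b. (b * exp \<tau> * \<beta> (exp \<tau> * b) - \<mu>) * Wfun \<beta> \<mu> C \<tau> b)
        = (\<lambda>b. C \<tau> * ((exp \<tau> * b * \<beta> (exp \<tau> * b) - \<mu>) * weight \<beta> \<mu> (exp \<tau>) b))"
      by (simp add: Wfun_eq_weight fun_eq_iff algebra_simps)
    then show ?thesis
      using C_eq[OF that] by (simp add: M_def divide_inverse mult.commute)
  qed
  have "((\<lambda>\<tau>. M (exp \<tau>)) \<longlongrightarrow> 0) at_top"
    unfolding M_def by (rule filterlim_compose[OF weighted_mean_tendsto_0[OF mu beta_lim] exp_at_top])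
  moreover have "eventually (\<lambda>\<tau>. M (exp \<tau>) = C \<tau> * delta \<mu> C \<tau>) at_top"
    using eventually_gt_at_top[of 0] by eventually_elim (simp add: delta_eq log_deriv)
  ultimately have "((\<lambda>\<tau>. C \<tau> * delta \<mu> C \<tau>) \<longlongrightarrow> 0) at_top"
    by (rule Lim_transform_eventually)
  then show ?thesis
    using log_deriv delta_eq weighted by simp
qed

end
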